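(* Let $(E,\mathcal{E},\nu)$ be a $\sigma$-finite measure space, $\phi$ a Young function satisfying the $\Delta_2$-condition, $w$ a weight function, and $\Psi:E\to E$ a non-singular measurable transformation inducing the composition operator $C_\Psi f=f\circ\Psi$ on the Orlicz-Lorentz space $L_{(\phi,w)}$, such that $\Psi(S)\in\mathcal{E}$ for every $S\in\mathcal{E}$. If $\mathcal{A}(C_\Psi)=\infty$, then there exists a sequence $(A_m)$ of measurable subsets of $E$ such that for all $m>1$: (1) $0<\nu(A_m)<\infty$; (2) $A_m\subseteq\Psi^{m-1}(B)$ for some $B\in\mathcal{E}$; (3) $A_m\notin\{\Psi^m(S): S\in\mathcal{E},\ \nu(S)>0\}$.
   Context: A Young function is a convex $\phi:[0,\infty)\to[0,\infty)$ with $\phi(x)=0\iff x=0$ and $\lim_{x\to\infty}\phi(x)=\infty$; $\Delta_2$-condition: $\phi(2x)\le k\phi(x)$ for some $k>0$ and all $x>0$. A weight function is a non-increasing locally integrable $w:(0,\infty)\to(0,\infty)$ with $\int_0^\infty w=\infty$. For measurable $f$, $\nu_f(s)=\nu\{|f|>s\}$, $f^*(t)=\inf\{s>0:\nu_f(s)\le t\}$; $L_{(\phi,w)}$ is the space of measurable $f:E\to\mathbb{C}$ with $\int_0^\infty\phi(\alpha f^*(t))w(t)\,dt<\infty$ for some $\alpha>0$, with the Luxemburg norm. $\Psi$ non-singular: $\nu(\Psi^{-1}(S))=0$ whenever $\nu(S)=0$; $\Psi^0=\mathrm{id}$. The ascent $\mathcal{A}(T)$ is the smallest integer $m$ with $\mathcal{N}(T^m)=\mathcal{N}(T^{m+1})$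 ($\mathcal{N}$ = kernel), and $\infty$ if no such $m$ exists. *)

theory Defs
  imports "HOL-Analysis.Analysis"
begin

definition young_function :: "(real \<Rightarrow> real) \<Rightarrow> bool" where
  "young_function \<phi> \<longleftrightarrow> convex_on {0..} \<phi> \<and> (\<forall>x\<ge>0. \<phi> x \<ge> 0)
     \<and> (\<forall>x\<ge>0. \<phi> x = 0 \<longleftrightarrow> x = 0) \<and> filterlim \<phi> at_top at_top"

definition delta2 :: "(real \<Rightarrow> real) \<Rightarrow> bool" where
  "delta2 \<phi> \<longleftrightarrow> (\<exists>k>0. \<forall>x>0. \<phi> (2 * x) \<le> k * \<phi> x)"

definition weight_function :: "(real \<Rightarrow> real) \<Rightarrow> bool" where
  "weight_function w \<longleftrightarrow> (\<forall>t>0. w t > 0)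
     \<and> (\<forall>s t. 0 < s \<longrightarrow> s \<le> t \<longrightarrow> w t \<le> w s)
     \<and> (\<forall>a b. 0 < a \<longrightarrow> set_integrable lborel {a..b} w)
     \<and> (\<integral>\<^sup>+ t \<in> {0<..}. ennreal (w t) \<partial>lborel) = \<infinity>"

definition distrib_fun :: "'a measure \<Rightarrow> ('a \<Rightarrow> complex) \<Rightarrow> real \<Rightarrow> ennreal" where
  "distrib_fun M f s = emeasure M {x \<in> space M. cmod (f x) > s}"

text \<open>Decreasing rearrangement f*(t) = inf {s > 0. nu_f(s) <= t}, valued in extended reals
  (infimum of the empty set is +infinity).\<close>
definition rearr :: "'a measure \<Rightarrow> ('a \<Rightarrow> complex) \<Rightarrow> real \<Rightarrow> ereal" where
  "rearr M f t = Inf (ereal ` {s. s > 0 \<and> distrib_fun M f s \<le> ennreal t})"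

definition OL_modular :: "'a measure \<Rightarrow> (real \<Rightarrow> real) \<Rightarrow> (real \<Rightarrow> real) \<Rightarrow> real
    \<Rightarrow> ('a \<Rightarrow> complex) \<Rightarrow> ennreal" where
  "OL_modular M \<phi> w \<alpha> f = (\<integral>\<^sup>+ t \<in> {0<..}.
      (if rearr M f t = \<infinity> then \<infinity> else ennreal (\<phi> (\<alpha> * real_of_ereal (rearr M f t)) * w t)) \<partial>lborel)"

text \<open>The Orlicz-Lorentz space L_(phi,w) (as a set of representatives).\<close>
definition OL_space :: "'a measure \<Rightarrow> (real \<Rightarrow> real) \<Rightarrow> (real \<Rightarrow> real) \<Rightarrow> ('a \<Rightarrow> complex) set" where
  "OL_space M \<phi> w = {f. f \<in> borel_measurable M \<and> (\<exists>\<alpha>>0. OL_modular M \<phi> w \<alpha> f < \<infinity>)}"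

definition non_singular :: "'a measure \<Rightarrow> ('a \<Rightarrow> 'a) \<Rightarrow> bool" where
  "non_singular M \<Psi> \<longleftrightarrow> (\<forall>S\<in>sets M. emeasure M S = 0 \<longrightarrow> emeasure M (\<Psi> -` S \<inter> space M) = 0)"

text \<open>Kernel of (C_Psi)^m = C_(Psi^m) on L_(phi,w): f with f o Psi^m = 0 a.e.\<close>
definition comp_kernel :: "'a measure \<Rightarrow> (real \<Rightarrow> real) \<Rightarrow> (real \<Rightarrow> real) \<Rightarrow> ('a \<Rightarrow> 'a) \<Rightarrow> nat
    \<Rightarrow> ('a \<Rightarrow> complex) set" where
  "comp_kernel M \<phi> w \<Psi> m = {f \<in> OL_space M \<phi> w. AE x in M. f ((\<Psi> ^^ m) x) = 0}"

definition comp_ascent :: "'a measure \<Rightarrow> (real \<Rightarrow> real) \<Rightarrow> (real \<Rightarrow> real) \<Rightarrow> ('a \<Rightarrow> 'a) \<Rightarrow> enat" where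
  "comp_ascent M \<phi> w \<Psi> =
     (if \<exists>m. comp_kernel M \<phi> w \<Psi> m = comp_kernel M \<phi> w \<Psi> (Suc m)
      then enat (LEAST m. comp_kernel M \<phi> w \<Psi> m = comp_kernel M \<phi> w \<Psi> (Suc m))
      else \<infinity>)"

end

theory Submission
  imports Defs
begin

(* Non-singularity makes the kernels of the powers of C_\<Psi> increase; their strict growth
   gives, for every k, a function f killed by C_\<Psi>^(k+1) but not by C_\<Psi>^k.  Its support N has
   a null preimage under \<Psi>^(k+1) and a non-null preimage D under \<Psi>^k.  Since \<Psi>^k is
   non-singular, \<Psi>^k(D) \<subseteq> N has positive measure, and by sigma-finiteness it contains a set
   A of finite positive measure.  If A were \<Psi>^(k+1)(S), then S would lie in the null preimage
   of N under \<Psi>^(k+1), so S itself would be null. *)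

lemma vimage_comp_Int_space:
  assumes "S \<in> measurable M M"
  shows "(T \<circ> S) -` N \<inter> space M = S -` (T -` N \<inter> space M) \<inter> space M"
  using measurable_space[OF assms] by auto

lemma non_singular_comp:
  assumes "S \<in> measurable M M" "T \<in> measurable M M" "non_singular M S" "non_singular M T"
  shows "non_singular M (T \<circ> S)"
  unfolding non_singular_def
proof (intro ballI impI)
  fix N assume "N \<in> sets M" "emeasure M N = 0"
  then have "emeasure M (T -` N \<inter> space M) = 0" "T -` N \<inter> space M \<in> sets M"
    using assms(2,4) by (auto simp: non_singular_def)
  then show "emeasure M ((T \<circ> S) -` N \<inter> space M) = 0"
    using assms(3) unfolding vimage_comp_Int_space[OF assms(1)] non_singular_def by blast
qed

lemma non_singular_funpow:
  assumes "\<Psi> \<in> measurable M M" "non_singular M \<Psi>"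
  shows "non_singular M (\<Psi> ^^ k)"
proof (induction k)
  case 0
  have "id -` N \<inter> space M = N" if "N \<in> sets M" for N
    using sets.sets_into_space[OF that] by auto
  then show ?case by (simp add: non_singular_def)
next
  case (Suc k)
  show ?case
    unfolding funpow_Suc_right
    using non_singular_comp[OF assms(1) measurable_compose_n[OF assms(1)] assms(2) Suc.IH] .
qed

lemma image_funpow_in_sets:
  assumes "\<forall>S \<in> sets M. \<Psi> ` S \<in> sets M" "S \<in> sets M"
  shows "(\<Psi> ^^ k) ` S \<in> sets M"
proof (induction k)
  case (Suc k)
  have "(\<Psi> ^^ Suc k) ` S = \<Psi> ` ((\<Psi> ^^ k) ` S)" by (simp add: image_comp)
  then show ?case using assms(1) Suc.IH by simp
qed (use assms(2) in simp)

lemma emeasure_image_pos_if_non_singular: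
  assumes "T \<in> measurable M M" "non_singular M T"
    and "D \<in> sets M" "T ` D \<in> sets M" "0 < emeasure M D"
  shows "0 < emeasure M (T ` D)"
proof (rule ccontr)
  assume "\<not> 0 < emeasure M (T ` D)"
  then have "emeasure M (T -` (T ` D) \<inter> space M) = 0"
    using assms(2,4) by (simp add: non_singular_def)
  moreover have "D \<subseteq> T -` (T ` D) \<inter> space M"
    using sets.sets_into_space[OF assms(3)] by auto
  ultimately have "emeasure M D = 0"
    using emeasure_mono measurable_sets[OF assms(1,4)] by (metis le_zero_eq)
  then show False using assms(5) by simp
qed

lemma emeasure_eq_0_if_image_in_null_vimage:
  assumes "T \<in> measurable M M" "N \<in> sets M" "emeasure M (T -` N \<inter> space M) = 0"
    and "S \<in> sets M" "T ` S \<subseteq> N"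
  shows "emeasure M S = 0"
proof -
  have "S \<subseteq> T -` N \<inter> space M"
    using assms(5) sets.sets_into_space[OF assms(4)] by auto
  then show ?thesis
    using emeasure_mono measurable_sets[OF assms(1,2)] assms(3) by (metis le_zero_eq)
qed

lemma (in sigma_finite_measure) obtain_finite_positive_subset:
  assumes "W \<in> sets M" "0 < emeasure M W"
  obtains Z where "Z \<in> sets M" "Z \<subseteq> W" "0 < emeasure M Z" "emeasure M Z < \<infinity>"
proof (cases "emeasure M W = \<infinity>")
  case True
  then show ?thesis
    using approx_PInf_emeasure_with_finite[OF assms(1), of 0] that by auto
next
  case False
  then show ?thesis using that assms by (simp add: less_top)
qed

lemma finite_set_not_image_of_positive_set:
  assumes "sigma_finite_measure M" "\<Psi> \<in> measurable M M" "non_singular M \<Psi>"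
    and "\<forall>S \<in> sets M. \<Psi> ` S \<in> sets M" and "N \<in> sets M"
    and null: "emeasure M ((\<Psi> ^^ Suc k) -` N \<inter> space M) = 0"
    and non_null: "emeasure M ((\<Psi> ^^ k) -` N \<inter> space M) \<noteq> 0"
  shows "\<exists>A \<in> sets M. 0 < emeasure M A \<and> emeasure M A < \<infinity>
    \<and> (\<exists>B \<in> sets M. A \<subseteq> (\<Psi> ^^ k) ` B)
    \<and> (\<forall>S \<in> sets M. 0 < emeasure M S \<longrightarrow> A \<noteq> (\<Psi> ^^ Suc k) ` S)"
proof -
  define D where "D = (\<Psi> ^^ k) -` N \<inter> space M"
  have D: "D \<in> sets M"
    unfolding D_def using measurable_sets[OF measurable_compose_n[OF assms(2)] assms(5)] .
  have image_D: "(\<Psi> ^^ k) ` D \<in> sets M"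
    using image_funpow_in_sets[OF assms(4) D] .
  have "0 < emeasure M D"
    using non_null not_gr_zero unfolding D_def by blast
  then have "0 < emeasure M ((\<Psi> ^^ k) ` D)"
    using emeasure_image_pos_if_non_singular[OF measurable_compose_n[OF assms(2)]
        non_singular_funpow[OF assms(2,3)] D image_D] by blast
  then obtain A where A: "A \<in> sets M" "A \<subseteq> (\<Psi> ^^ k) ` D" "0 < emeasure M A" "emeasure M A < \<infinity>"
    using sigma_finite_measure.obtain_finite_positive_subset[OF assms(1) image_D] by blast
  have "A \<subseteq> N" using A(2) by (auto simp: D_def)
  then have "emeasure M S = 0" if "S \<in> sets M" "A = (\<Psi> ^^ Suc k) ` S" for S
    using emeasure_eq_0_if_image_in_null_vimage[OF measurable_compose_n[OF assms(2)] assms(5) null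
        that(1)] that(2) by blast
  then have "\<forall>S \<in> sets M. 0 < emeasure M S \<longrightarrow> A \<noteq> (\<Psi> ^^ Suc k) ` S"
    by force
  then show ?thesis using A D by blast
qed

lemma OL_space_support_in_sets:
  assumes "f \<in> OL_space M \<phi> w"
  shows "{x \<in> space M. f x \<noteq> 0} \<in> sets M"
proof -
  have "f \<in> borel_measurable M" using assms by (simp add: OL_space_def)
  then show ?thesis by measurable
qed

lemma comp_kernel_iff:
  assumes "\<Psi> \<in> measurable M M" "f \<in> OL_space M \<phi> w"
  shows "f \<in> comp_kernel M \<phi> w \<Psi> k
    \<longleftrightarrow> emeasure M ((\<Psi> ^^ k) -` {y \<in> space M. f y \<noteq> 0} \<inter> space M) = 0"
proof -
  have "(\<Psi> ^^ k) -` {y \<in> space M. f y \<noteq> 0} \<inter> space M \<in> sets M"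
    using measurable_sets[OF measurable_compose_n[OF assms(1)] OL_space_support_in_sets[OF assms(2)]] .
  moreover have "{x \<in> space M. f ((\<Psi> ^^ k) x) \<noteq> 0}
      = (\<Psi> ^^ k) -` {y \<in> space M. f y \<noteq> 0} \<inter> space M"
    using measurable_space[OF measurable_compose_n[OF assms(1)]] by auto
  ultimately show ?thesis
    using assms(2) by (simp add: comp_kernel_def AE_iff_measurable[of _ M])
qed

lemma comp_kernel_mono:
  assumes "\<Psi> \<in> measurable M M" "non_singular M \<Psi>"
  shows "comp_kernel M \<phi> w \<Psi> k \<subseteq> comp_kernel M \<phi> w \<Psi> (Suc k)"
proof
  fix f assume f: "f \<in> comp_kernel M \<phi> w \<Psi> k"
  then have OL: "f \<in> OL_space M \<phi> w" by (simp add: comp_kernel_def)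
  define P where "P = (\<Psi> ^^ k) -` {x \<in> space M. f x \<noteq> 0} \<inter> space M"
  have "P \<in> sets M"
    unfolding P_def
    using measurable_sets[OF measurable_compose_n[OF assms(1)] OL_space_support_in_sets[OF OL]] .
  moreover have "emeasure M P = 0"
    using f by (simp add: P_def comp_kernel_iff[OF assms(1) OL])
  ultimately have "emeasure M (\<Psi> -` P \<inter> space M) = 0"
    using assms(2) by (simp add: non_singular_def)
  then show "f \<in> comp_kernel M \<phi> w \<Psi> (Suc k)"
    unfolding comp_kernel_iff[OF assms(1) OL] funpow_Suc_right vimage_comp_Int_space[OF assms(1)]
    by (simp only: P_def)
qed

lemma comp_kernel_strict_if_comp_ascent_infinite:
  assumes "comp_ascent M \<phi> w \<Psi> = \<infinity>"
  shows "comp_kernel M \<phi> w \<Psi> k \<noteq> comp_kernel M \<phi> w \<Psi> (Suc k)"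
  using assms by (auto simp: comp_ascent_def split: if_splits)

lemma obtain_support_with_null_vimage_step:
  assumes "\<Psi> \<in> measurable M M" "non_singular M \<Psi>"
    and "comp_kernel M \<phi> w \<Psi> k \<noteq> comp_kernel M \<phi> w \<Psi> (Suc k)"
  obtains N where "N \<in> sets M" "emeasure M ((\<Psi> ^^ Suc k) -` N \<inter> space M) = 0"
    "emeasure M ((\<Psi> ^^ k) -` N \<inter> space M) \<noteq> 0"
proof -
  obtain f where f: "f \<in> comp_kernel M \<phi> w \<Psi> (Suc k)" "f \<notin> comp_kernel M \<phi> w \<Psi> k"
    using assms(3) comp_kernel_mono[OF assms(1,2)] by blast
  then have OL: "f \<in> OL_space M \<phi> w" by (simp add: comp_kernel_def)
  show ?thesis
    using that[OF OL_space_support_in_sets[OF OL]] f by (simp add: comp_kernel_iff[OF assms(1) OL])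
qed

theorem theorem3p9:
  fixes M :: "'a measure" and \<phi> w :: "real \<Rightarrow> real" and \<Psi> :: "'a \<Rightarrow> 'a"
  assumes "sigma_finite_measure M"
    and "young_function \<phi>" and "delta2 \<phi>"
    and "weight_function w"
    and "\<Psi> \<in> measurable M M" and "non_singular M \<Psi>"
    and "\<forall>f \<in> OL_space M \<phi> w. f \<circ> \<Psi> \<in> OL_space M \<phi> w"
    and "\<forall>S \<in> sets M. \<Psi> ` S \<in> sets M"
    and "comp_ascent M \<phi> w \<Psi> = \<infinity>"
  shows "\<exists>A :: nat \<Rightarrow> 'a set. (\<forall>m. A m \<in> sets M) \<and>
    (\<forall>m>1. 0 < emeasure M (A m) \<and> emeasure M (A m) < \<infinity>
       \<and> (\<exists>B \<in> sets M. A m \<subseteq> (\<Psi> ^^ (m - 1)) ` B)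
       \<and> (\<forall>S \<in> sets M. emeasure M S > 0 \<longrightarrow> A m \<noteq> (\<Psi> ^^ m) ` S))"
proof -
  have "\<exists>A \<in> sets M. 0 < emeasure M A \<and> emeasure M A < \<infinity>
      \<and> (\<exists>B \<in> sets M. A \<subseteq> (\<Psi> ^^ k) ` B)
      \<and> (\<forall>S \<in> sets M. 0 < emeasure M S \<longrightarrow> A \<noteq> (\<Psi> ^^ Suc k) ` S)" for k
  proof -
    obtain N where "N \<in> sets M" "emeasure M ((\<Psi> ^^ Suc k) -` N \<inter> space M) = 0"
      "emeasure M ((\<Psi> ^^ k) -` N \<inter> space M) \<noteq> 0"
      using obtain_support_with_null_vimage_step[OF assms(5,6)
          comp_kernel_strict_if_comp_ascent_infinite[OF assms(9)]] .
    then show ?thesis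
      using finite_set_not_image_of_positive_set[OF assms(1,5,6,8)] by blast
  qed
  then obtain A where A: "\<And>k. A k \<in> sets M \<and> 0 < emeasure M (A k) \<and> emeasure M (A k) < \<infinity>
      \<and> (\<exists>B \<in> sets M. A k \<subseteq> (\<Psi> ^^ k) ` B)
      \<and> (\<forall>S \<in> sets M. 0 < emeasure M S \<longrightarrow> A k \<noteq> (\<Psi> ^^ Suc k) ` S)"
    by metis
  show ?thesis
  proof (intro exI[of _ "\<lambda>m. A (m - 1)"] conjI allI impI)
    fix m :: nat assume "1 < m"
    then have "Suc (m - 1) = m" by simp
    then show "0 < emeasure M (A (m - 1))" "emeasure M (A (m - 1)) < \<infinity>"
      "\<exists>B \<in> sets M. A (m - 1) \<subseteq> (\<Psi> ^^ (m - 1)) ` B"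
      "\<forall>S \<in> sets M. 0 < emeasure M S \<longrightarrow> A (m - 1) \<noteq> (\<Psi> ^^ m) ` S"
      using A[of "m - 1"] by metis+
  qed (use A in blast)
qed

end
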